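(* Let $K$ be an algebraically closed field of characteristic zero, $\deg_1$ the weighted degree on $K[x_1,\dots,x_n]$ assigning positive real weights $w_i$ to $x_i$, $\Phi=(f_1,\dots,f_n)$ a polynomial automorphism of $K^n$ with jacobian $\lambda$, $\Phi^{-1}=(g_1,\dots,g_n)$, $d_i=\deg_1(f_i)$, and $\deg_2$ the weighted degree assigning weight $d_i$ to $x_i$. Let $\delta_i(P)=\lambda^{-1}\frac{\partial P}{\partial x_i}$ and $\Delta_i(P)=\mathrm{j}(g_1,\dots,g_{i-1},P,g_{i+1},\dots,g_n)$. Then there exists an index $i$ such that $\deg_2(\Delta_i)\ge\deg_1(\delta_i)=-w_i$.
   Context: $\mathrm{j}$ denotes the jacobian determinant. For a p.w.h. degree $\deg$ and a $K$-derivation $\partial$ of $K[x_1,\dots,x_n]$, $\deg(\partial)=\sup\{\deg(\partial(P))-\deg(P) : P\ne 0\}$ (equal to $-\infty$ iff $\partial=0$). *)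

theory Defs
  imports "HOL-Analysis.Analysis" "HOL-Library.Poly_Mapping"
    "HOL-Computational_Algebra.Polynomial"
begin

text \<open>Polynomials in the variables indexed by the finite type 'n with coefficients in 'a:
  finitely supported maps from monomials (exponent vectors) to coefficients.\<close>
type_synonym ('n, 'a) mpoly = "('n \<Rightarrow>\<^sub>0 nat) \<Rightarrow>\<^sub>0 'a"

definition mvar :: "'n \<Rightarrow> ('n, 'a::comm_ring_1) mpoly" where
  "mvar i = Poly_Mapping.single (Poly_Mapping.single i 1) 1"

definition mconst :: "'a::comm_ring_1 \<Rightarrow> ('n, 'a) mpoly" where
  "mconst c = Poly_Mapping.single 0 c"

definition mpderiv :: "'n \<Rightarrow> ('n, 'a::comm_ring_1) mpoly \<Rightarrow> ('n, 'a) mpoly" where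
  "mpderiv i P = (\<Sum>m\<in>Poly_Mapping.keys P.
      Poly_Mapping.single (m - Poly_Mapping.single i 1) (of_nat (Poly_Mapping.lookup (m::'n \<Rightarrow>\<^sub>0 nat) i) * Poly_Mapping.lookup P m))"

definition msubst :: "('n::finite \<Rightarrow> ('n, 'a::comm_ring_1) mpoly) \<Rightarrow> ('n, 'a) mpoly \<Rightarrow> ('n, 'a) mpoly" where
  "msubst g P = (\<Sum>m\<in>Poly_Mapping.keys P. mconst (Poly_Mapping.lookup P m) * (\<Prod>i\<in>UNIV. g i ^ Poly_Mapping.lookup m i))"

definition jac :: "('n::finite \<Rightarrow> ('n, 'a::comm_ring_1) mpoly) \<Rightarrow> ('n, 'a) mpoly" where
  "jac f = det (\<chi> i k. mpderiv k (f i))"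

definition wdeg :: "('n::finite \<Rightarrow> real) \<Rightarrow> ('n, 'a::zero) mpoly \<Rightarrow> ereal" where
  "wdeg w P = (if P = 0 then -\<infinity>
      else Max ((\<lambda>m. ereal (\<Sum>i\<in>UNIV. w i * real (Poly_Mapping.lookup (m::'n \<Rightarrow>\<^sub>0 nat) i))) ` Poly_Mapping.keys P))"

definition deriv_deg :: "('n::finite \<Rightarrow> real) \<Rightarrow> (('n, 'a::zero) mpoly \<Rightarrow> ('n, 'a) mpoly) \<Rightarrow> ereal" where
  "deriv_deg w D = Sup {wdeg w (D P) - wdeg w P | P. P \<noteq> 0}"

end

theory Submission
  imports Defs
begin

text \<open>Pick a monomial \<open>m\<close> of maximal \<open>w\<close>-weight in some component \<open>f\<^sub>k\<close> and a variable \<open>x\<^sub>i\<close>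
  occurring in it. Substituting \<open>\<Phi>\<close> into \<open>\<Delta>\<^sub>i(x\<^sub>k)\<close> replaces the \<open>i\<close>-th row of the jacobian
  matrix of \<open>\<Phi>\<^sup>-\<^sup>1 \<circ> \<Phi> = id\<close> by the gradient of \<open>f\<^sub>k\<close>, so by the chain rule
  \<open>\<lambda> \<Delta>\<^sub>i(x\<^sub>k)(f\<^sub>1,\<dots>,f\<^sub>n) = \<partial>f\<^sub>k/\<partial>x\<^sub>i\<close>. In characteristic zero \<open>\<partial>f\<^sub>k/\<partial>x\<^sub>i\<close> contains \<open>m/x\<^sub>i\<close>,
  of \<open>w\<close>-weight \<open>d\<^sub>k - w\<^sub>i\<close>, while substituting the \<open>f\<^sub>j\<close> turns \<open>deg\<^sub>2\<close> into an upper bound for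
  \<open>deg\<^sub>1\<close>. Hence \<open>deg\<^sub>2(\<Delta>\<^sub>i(x\<^sub>k)) - deg\<^sub>2(x\<^sub>k) \<ge> -w\<^sub>i\<close>, and \<open>-w\<^sub>i\<close> is exactly the degree of
  \<open>\<delta>\<^sub>i\<close>, attained at \<open>x\<^sub>i\<close>.\<close>

abbreviation var_exp :: "'n \<Rightarrow> ('n \<Rightarrow>\<^sub>0 nat)" where
  "var_exp i \<equiv> Poly_Mapping.single i 1"

lemma lookup_var_exp: "Poly_Mapping.lookup (Poly_Mapping.single i (Suc 0)) j = (if i = j then 1 else 0)"
  by (simp add: lookup_single when_def)

section \<open>Monomial expansion and induction\<close>

lemma mpoly_expand: "P = (\<Sum>m\<in>Poly_Mapping.keys P. Poly_Mapping.single m (Poly_Mapping.lookup P m))"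
proof (rule poly_mapping_eqI)
  fix k
  have "Poly_Mapping.lookup (\<Sum>m\<in>Poly_Mapping.keys P. Poly_Mapping.single m (Poly_Mapping.lookup P m)) k
     = (\<Sum>m\<in>Poly_Mapping.keys P. (if m = k then Poly_Mapping.lookup P m else 0))"
    by (simp add: lookup_sum lookup_single when_def)
  also have "\<dots> = Poly_Mapping.lookup P k"
    by (simp add: in_keys_iff)
  finally show "Poly_Mapping.lookup P k = Poly_Mapping.lookup (\<Sum>m\<in>Poly_Mapping.keys P. Poly_Mapping.single m (Poly_Mapping.lookup P m)) k"
    by simp
qed

lemma poly_mapping_sum_singles:
  "(m::'n::finite \<Rightarrow>\<^sub>0 nat) = (\<Sum>i\<in>UNIV. Poly_Mapping.single i (Poly_Mapping.lookup m i))"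
  by (rule poly_mapping_eqI) (simp add: lookup_sum lookup_single when_def)

lemma sum_keys_superset:
  assumes "\<forall>m. h m 0 = 0" "finite S" "Poly_Mapping.keys P \<subseteq> S"
  shows "(\<Sum>m\<in>Poly_Mapping.keys P. h m (Poly_Mapping.lookup P m)) = (\<Sum>m\<in>S. h m (Poly_Mapping.lookup P m))"
  by (rule sum.mono_neutral_left) (use assms in \<open>auto simp: in_keys_iff\<close>)

lemma sum_keys_add:
  fixes h :: "'k \<Rightarrow> 'b::comm_monoid_add \<Rightarrow> 'c::comm_monoid_add"
  assumes "\<forall>m. h m 0 = 0" "\<forall>m a b. h m (a + b) = h m a + h m b"
  shows "(\<Sum>m\<in>Poly_Mapping.keys (P + Q). h m (Poly_Mapping.lookup (P + Q) m)) =
     (\<Sum>m\<in>Poly_Mapping.keys P. h m (Poly_Mapping.lookup P m)) + (\<Sum>m\<in>Poly_Mapping.keys Q. h m (Poly_Mapping.lookup Q m))"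
proof -
  let ?S = "Poly_Mapping.keys P \<union> Poly_Mapping.keys Q"
  have "(\<Sum>m\<in>Poly_Mapping.keys (P + Q). h m (Poly_Mapping.lookup (P + Q) m)) = (\<Sum>m\<in>?S. h m (Poly_Mapping.lookup (P + Q) m))"
    by (rule sum_keys_superset) (use assms keys_add[of P Q] in auto)
  also have "\<dots> = (\<Sum>m\<in>?S. h m (Poly_Mapping.lookup P m)) + (\<Sum>m\<in>?S. h m (Poly_Mapping.lookup Q m))"
    by (simp add: lookup_add assms sum.distrib)
  also have "\<dots> = (\<Sum>m\<in>Poly_Mapping.keys P. h m (Poly_Mapping.lookup P m)) + (\<Sum>m\<in>Poly_Mapping.keys Q. h m (Poly_Mapping.lookup Q m))"
    using sum_keys_superset[of h ?S P] sum_keys_superset[of h ?S Q] assms(1) by auto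
  finally show ?thesis .
qed

lemma additive_poly_mapping_eqI:
  fixes F G :: "('k \<Rightarrow>\<^sub>0 'b::comm_monoid_add) \<Rightarrow> 'c::ab_group_add"
  assumes "\<And>x y. F (x + y) = F x + F y" "\<And>x y. G (x + y) = G x + G y"
    and "\<And>m a. F (Poly_Mapping.single m a) = G (Poly_Mapping.single m a)"
  shows "F P = G P"
proof -
  have F0: "F 0 = 0" using assms(1)[of 0 0] by simp
  have G0: "G 0 = 0" using assms(2)[of 0 0] by simp
  have "F (\<Sum>m\<in>S. Poly_Mapping.single m (Poly_Mapping.lookup P m)) = G (\<Sum>m\<in>S. Poly_Mapping.single m (Poly_Mapping.lookup P m))"
    for S :: "'k set"
    by (induction S rule: infinite_finite_induct) (auto simp: F0 G0 assms)
  then show ?thesis using mpoly_expand[of P] by metis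
qed

lemma mconst_0[simp]: "mconst 0 = 0" by (simp add: mconst_def)
lemma mconst_1[simp]: "mconst 1 = 1" by (simp add: mconst_def)
lemma mconst_mult: "mconst (a * b) = mconst a * mconst b" by (simp add: mconst_def mult_single)
lemma mconst_mult_single: "mconst c * Poly_Mapping.single m a = Poly_Mapping.single m (c * a)"
  by (simp add: mconst_def mult_single)

lemma single_ne_zero: "a \<noteq> 0 \<Longrightarrow> Poly_Mapping.single m a \<noteq> 0"
  by (metis lookup_single_eq lookup_zero)

lemma mvar_ne_zero: "mvar k \<noteq> (0::('n, 'a::comm_ring_1) mpoly)"
  unfolding mvar_def by (rule single_ne_zero) simp

lemma mconst_ne_mvar: "mconst c \<noteq> (mvar k :: ('n, 'a::comm_ring_1) mpoly)"
proof
  assume "mconst c = mvar k"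
  then have "Poly_Mapping.lookup (mconst c :: ('n, 'a) mpoly) (var_exp k) = Poly_Mapping.lookup (mvar k :: ('n, 'a) mpoly) (var_exp k)"
    by simp
  moreover have "(0::'n \<Rightarrow>\<^sub>0 nat) \<noteq> var_exp k"
    by (metis lookup_single_eq lookup_zero one_neq_zero)
  ultimately show False by (simp add: mconst_def mvar_def lookup_single when_def)
qed

lemma mpoly_eq_mconstI:
  assumes "Poly_Mapping.keys P \<subseteq> {0}"
  shows "P = mconst (Poly_Mapping.lookup P 0)"
  by (rule poly_mapping_eqI) (use assms in \<open>auto simp: mconst_def lookup_single when_def in_keys_iff\<close>)

lemma single_pow:
  "Poly_Mapping.single (var_exp i) (1::'a::comm_semiring_1) ^ k = Poly_Mapping.single (Poly_Mapping.single i k) 1"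
  by (induction k) (simp_all add: mult_single single_add[symmetric] add.commute)

lemma prod_single_pow:
  fixes f :: "'n \<Rightarrow> nat"
  shows "(\<Prod>i\<in>S. Poly_Mapping.single (var_exp i) (1::'a::comm_semiring_1) ^ f i)
    = Poly_Mapping.single (\<Sum>i\<in>S. Poly_Mapping.single i (f i)) 1"
  by (induction S rule: infinite_finite_induct) (simp_all add: single_pow[simplified] mult_single)

lemma single_eq_mconst_mult_monomial:
  "Poly_Mapping.single (m::'n::finite \<Rightarrow>\<^sub>0 nat) (a::'a::comm_ring_1) = mconst a * (\<Prod>i\<in>UNIV. mvar i ^ Poly_Mapping.lookup m i)"
  unfolding mvar_def prod_single_pow mconst_mult_single
  using poly_mapping_sum_singles[of m] by simp

lemma mpoly_induct[case_names const var add mult]: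
  fixes P :: "('n::finite, 'a::comm_ring_1) mpoly"
  assumes const: "\<And>c. Q (mconst c)" and var: "\<And>i. Q (mvar i)"
    and add: "\<And>p q. Q p \<Longrightarrow> Q q \<Longrightarrow> Q (p + q)" and mult: "\<And>p q. Q p \<Longrightarrow> Q q \<Longrightarrow> Q (p * q)"
  shows "Q P"
proof -
  have Q0: "Q 0" and Q1: "Q 1" using const[of 0] const[of 1] by simp_all
  have "Q (p ^ k)" if "Q p" for p and k :: nat
    by (induction k) (simp_all add: Q1 mult that)
  then have "Q (\<Prod>i\<in>S. mvar i ^ f i)" for S :: "'n set" and f
    by (induction S rule: infinite_finite_induct) (simp_all add: Q1 mult var)
  then have "Q (Poly_Mapping.single m a)" for m a
    unfolding single_eq_mconst_mult_monomial by (rule mult[OF const])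
  then have "Q (\<Sum>m\<in>S. Poly_Mapping.single m (Poly_Mapping.lookup P m))" for S
    by (induction S rule: infinite_finite_induct) (simp_all add: Q0 add)
  then show ?thesis using mpoly_expand[of P] by metis
qed

section \<open>Substitution\<close>

lemma msubst_add: "msubst g (P + Q) = msubst g P + msubst g Q"
  unfolding msubst_def by (rule sum_keys_add) (simp_all add: mconst_def single_add distrib_right)

lemma msubst_single: "msubst g (Poly_Mapping.single m a) = mconst a * (\<Prod>i\<in>UNIV. g i ^ Poly_Mapping.lookup m i)"
  unfolding msubst_def by (simp add: mconst_def)

lemma msubst_mconst[simp]: "msubst g (mconst c) = mconst c"
  unfolding mconst_def[of c] msubst_single by (simp add: mconst_def)

lemma msubst_0[simp]: "msubst g 0 = 0"
  using msubst_mconst[of g 0] by simp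

lemma msubst_1[simp]: "msubst g 1 = 1"
  using msubst_mconst[of g 1] by simp

lemma prod_pow_lookup_var_exp:
  "(\<Prod>j\<in>(UNIV::'n::finite set). (g j::'b::comm_monoid_mult) ^ Poly_Mapping.lookup (var_exp i) j) = g i"
proof -
  have "(\<Prod>j\<in>(UNIV::'n set). g j ^ Poly_Mapping.lookup (var_exp i) j) = (\<Prod>j\<in>(UNIV::'n set). if i = j then g j else 1)"
    by (rule prod.cong) (auto simp: lookup_single when_def)
  then show ?thesis by simp
qed

lemma msubst_mvar[simp]: "msubst g (mvar i) = g i"
  unfolding mvar_def msubst_single using prod_pow_lookup_var_exp[of g i] by simp

lemma prod_pow_lookup_add_var_exp:
  fixes g :: "'n::finite \<Rightarrow> 'b::comm_monoid_mult"
  shows "(\<Prod>j\<in>UNIV. g j ^ Poly_Mapping.lookup (var_exp i + m) j) = g i * (\<Prod>j\<in>UNIV. g j ^ Poly_Mapping.lookup m j)"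
proof -
  have "(\<Prod>j\<in>UNIV. g j ^ Poly_Mapping.lookup (var_exp i + m) j)
      = (\<Prod>j\<in>UNIV. g j ^ Poly_Mapping.lookup (var_exp i) j) * (\<Prod>j\<in>UNIV. g j ^ Poly_Mapping.lookup m j)"
    by (simp only: lookup_add power_add prod.distrib)
  then show ?thesis by (simp only: prod_pow_lookup_var_exp)
qed

lemma msubst_mult: "msubst g (P * Q) = msubst g P * msubst g Q"
proof (induction P arbitrary: Q rule: mpoly_induct)
  case (const c)
  show ?case
    by (rule additive_poly_mapping_eqI[where F="\<lambda>Q. msubst g (mconst c * Q)" and G="\<lambda>Q. msubst g (mconst c) * msubst g Q"])
       (simp_all add: distrib_left msubst_add mconst_mult_single msubst_single mconst_mult mult.assoc)
next
  case (var i)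
  show ?case
    by (rule additive_poly_mapping_eqI[where F="\<lambda>Q. msubst g (mvar i * Q)" and G="\<lambda>Q. msubst g (mvar i) * msubst g Q"])
       (simp_all add: distrib_left msubst_add mvar_def mult_single msubst_single
          prod_pow_lookup_add_var_exp[simplified] prod_pow_lookup_var_exp[simplified] mult.left_commute)
next
  case (add p q)
  then show ?case by (simp add: distrib_right msubst_add)
next
  case (mult p q)
  then show ?case by (simp add: mult.assoc)
qed

lemma msubst_sum: "msubst g (sum F S) = (\<Sum>x\<in>S. msubst g (F x))"
  by (induction S rule: infinite_finite_induct) (auto simp: msubst_add)

lemma msubst_prod: "msubst g (prod F S) = (\<Prod>x\<in>S. msubst g (F x))"
  by (induction S rule: infinite_finite_induct) (auto simp: msubst_mult)

lemma msubst_of_int: "msubst g (of_int z) = of_int z"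
  using msubst_mconst[of g "of_int z"] by (simp add: mconst_def)

lemma msubst_det: "msubst F (det A) = det (\<chi> i j. msubst F (A$i$j))"
  unfolding det_def by (simp add: msubst_sum msubst_mult msubst_of_int msubst_prod)

section \<open>Partial derivatives and the chain rule\<close>

lemma mpderiv_add: "mpderiv i (P + Q) = mpderiv i P + mpderiv i Q"
  unfolding mpderiv_def by (rule sum_keys_add) (simp_all add: single_add distrib_left)

lemma mpderiv_single:
  "mpderiv i (Poly_Mapping.single m a) = Poly_Mapping.single (m - var_exp i) (of_nat (Poly_Mapping.lookup m i) * a)"
  unfolding mpderiv_def by simp

lemma mpderiv_mconst[simp]: "mpderiv i (mconst c) = 0"
  unfolding mconst_def mpderiv_single by simp

lemma mpderiv_0[simp]: "mpderiv k 0 = 0"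
  using mpderiv_mconst[of k 0] by simp

lemma mpderiv_mvar: "mpderiv k (mvar i) = (if k = i then 1 else 0)"
  unfolding mvar_def mpderiv_single by (auto simp: lookup_single when_def)

lemma add_var_exp_diff_cancel: "var_exp i + m - var_exp i = (m :: 'n \<Rightarrow>\<^sub>0 nat)"
  by (rule poly_mapping_eqI) (simp add: lookup_add lookup_minus)

lemma add_diff_var_exp:
  assumes "Poly_Mapping.lookup m i > 0"
  shows "var_exp i + (m - var_exp i) = (m :: 'n \<Rightarrow>\<^sub>0 nat)"
  by (rule poly_mapping_eqI) (use assms in \<open>auto simp: lookup_add lookup_minus lookup_var_exp\<close>)

lemma add_var_exp_diff_assoc:
  assumes "k \<noteq> i \<or> Poly_Mapping.lookup m k > 0"
  shows "var_exp i + m - var_exp k = var_exp i + (m - var_exp k :: 'n \<Rightarrow>\<^sub>0 nat)"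
  by (rule poly_mapping_eqI) (use assms in \<open>auto simp: lookup_add lookup_minus lookup_single when_def\<close>)

lemma mpderiv_mvar_mult_single:
  fixes a :: "'a::comm_ring_1"
  shows "mpderiv k (mvar i * Poly_Mapping.single m a)
    = mpderiv k (mvar i) * Poly_Mapping.single m a + mvar i * mpderiv k (Poly_Mapping.single m a)"
proof (cases "Poly_Mapping.lookup m k > 0")
  case True
  show ?thesis
  proof (cases "k = i")
    case True
    then show ?thesis using \<open>Poly_Mapping.lookup m k > 0\<close>
      by (simp add: mvar_def mult_single mpderiv_single mpderiv_mvar add_diff_var_exp[simplified]
          add_var_exp_diff_cancel[simplified] lookup_add single_add[symmetric] distrib_right add.commute)
  next
    case False
    have "var_exp i + m - var_exp k = var_exp i + (m - var_exp k)"
      using add_var_exp_diff_assoc[of k i m] False by simp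
    with False show ?thesis
      by (simp add: mvar_def mult_single mpderiv_single mpderiv_mvar lookup_add lookup_var_exp)
  qed
next
  case False
  then show ?thesis
    by (cases "k = i")
       (simp_all add: mvar_def mult_single mpderiv_single mpderiv_mvar add_var_exp_diff_cancel[simplified]
          lookup_add lookup_var_exp)
qed

lemma mpderiv_mult:
  fixes P :: "('n::finite, 'a::comm_ring_1) mpoly"
  shows "mpderiv k (P * R) = mpderiv k P * R + P * mpderiv k R"
proof (induction P arbitrary: R rule: mpoly_induct)
  case (const c)
  have single: "mpderiv k (mconst c * Poly_Mapping.single m a)
      = mpderiv k (mconst c) * Poly_Mapping.single m a + mconst c * mpderiv k (Poly_Mapping.single m a)" for m a
    by (simp add: mconst_mult_single mpderiv_single mult.left_commute)
  show ?case
    by (rule additive_poly_mapping_eqI[where F="\<lambda>Q. mpderiv k (mconst c * Q)" and G="\<lambda>Q. mpderiv k (mconst c) * Q + mconst c * mpderiv k Q"])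
       (simp_all only: single distrib_left mpderiv_add distrib_right add_ac)
next
  case (var i)
  show ?case
    by (rule additive_poly_mapping_eqI[where F="\<lambda>Q. mpderiv k (mvar i * Q)" and G="\<lambda>Q. mpderiv k (mvar i) * Q + mvar i * mpderiv k Q"])
       (simp_all only: mpderiv_mvar_mult_single distrib_left mpderiv_add distrib_right add_ac)
next
  case (add p q)
  show ?case using add.IH(1)[of R] add.IH(2)[of R] by (simp add: distrib_right mpderiv_add)
next
  case (mult p q)
  have "mpderiv k (p * q * R) = mpderiv k p * (q * R) + p * (mpderiv k q * R + q * mpderiv k R)"
    using mult.IH(1)[of "q * R"] mult.IH(2)[of R] by (simp add: mult.assoc)
  also have "\<dots> = (mpderiv k p * q + p * mpderiv k q) * R + p * q * mpderiv k R"
    by (simp add: algebra_simps)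
  finally show ?case using mult.IH(1)[of q] by simp
qed

lemma mpderiv_msubst:
  fixes P :: "('n::finite, 'a::comm_ring_1) mpoly"
  shows "mpderiv k (msubst g P) = (\<Sum>j\<in>UNIV. msubst g (mpderiv j P) * mpderiv k (g j))"
proof (induction P rule: mpoly_induct)
  case (const c)
  then show ?case by simp
next
  case (var i)
  have "(\<Sum>j\<in>UNIV. msubst g (mpderiv j (mvar i)) * mpderiv k (g j)) = (\<Sum>j\<in>UNIV. if j = i then mpderiv k (g j) else 0)"
    by (rule sum.cong) (auto simp: mpderiv_mvar)
  then show ?case by simp
next
  case (add p q)
  then show ?case by (simp add: msubst_add mpderiv_add distrib_right sum.distrib)
next
  case (mult p q)
  then show ?case
    by (simp add: msubst_mult mpderiv_mult msubst_add sum.distrib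
        sum_distrib_left sum_distrib_right algebra_simps)
qed

section \<open>Jacobians\<close>

lemma jac_msubst: "jac (\<lambda>i. msubst F (H i)) = msubst F (jac H) * jac F"
proof -
  have "(\<chi> i k. mpderiv k (msubst F (H i))) = (\<chi> i j. msubst F (mpderiv j (H i))) ** (\<chi> j k. mpderiv k (F j))"
    by (simp add: vec_eq_iff matrix_matrix_mult_def mpderiv_msubst)
  then show ?thesis unfolding jac_def by (simp add: det_mul msubst_det)
qed

lemma jac_mvar: "jac (\<lambda>i. mvar i) = (1 :: ('n::finite, 'a::comm_ring_1) mpoly)"
proof -
  have "(\<chi> i k. mpderiv k (mvar i :: ('n, 'a) mpoly)) = mat 1"
    by (simp add: vec_eq_iff mat_def mpderiv_mvar)
  then show ?thesis unfolding jac_def by simp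
qed

lemma det_identity_row_update:
  fixes a :: "'n::finite \<Rightarrow> 'a::comm_ring_1"
  shows "det (\<chi> j k. if j = i then a k else (if j = k then 1 else 0)) = a i"
proof -
  let ?M = "(\<chi> j k. if j = i then a k else (if j = k then 1 else 0)) :: 'a^'n^'n"
  have "(\<Prod>j\<in>UNIV. ?M$j$p j) = 0" if p: "p permutes UNIV" "p \<noteq> id" for p
  proof -
    obtain j where "j \<noteq> i" "p j \<noteq> j"
      using p permutes_inj[OF p(1)] by (metis eq_id_iff injD)
    then have "?M$j$p j = 0" by simp
    then show ?thesis by (meson UNIV_I finite_class.finite_UNIV prod_zero)
  qed
  then have "det ?M = (\<Sum>p\<in>{p. p permutes (UNIV::'n set)}. if p = id then of_int (sign p) * (\<Prod>j\<in>UNIV. ?M$j$p j) else 0)"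
    unfolding det_def by (intro sum.cong) (auto simp: id_def)
  also have "\<dots> = (\<Prod>j\<in>UNIV. ?M$j$id j)"
    by (simp add: permutes_id sign_id)
  also have "\<dots> = (\<Prod>j\<in>UNIV. if j = i then a i else 1)"
    by (intro prod.cong) auto
  finally show ?thesis by simp
qed

lemma jac_mvar_update: "jac ((\<lambda>j. mvar j)(i := P)) = mpderiv i (P :: ('n::finite, 'a::comm_ring_1) mpoly)"
proof -
  have "(\<chi> j k. mpderiv k (((\<lambda>j. mvar j)(i := P)) j)) = (\<chi> j k. if j = i then mpderiv k P else (if j = k then 1 else 0))"
    by (simp add: vec_eq_iff mpderiv_mvar)
  then show ?thesis unfolding jac_def using det_identity_row_update[of i "\<lambda>k. mpderiv k P"] by simp
qed

lemma msubst_jac_mult_jac_inverse: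
  assumes "\<forall>i. msubst g (f i) = mvar i"
  shows "msubst g (jac f) * jac g = 1"
proof -
  have "msubst g (jac f) * jac g = jac (\<lambda>i. msubst g (f i))" by (rule jac_msubst[symmetric])
  also have "\<dots> = 1" using assms jac_mvar by simp
  finally show ?thesis .
qed

lemma msubst_jac_update_mult_jac:
  assumes "\<forall>j. msubst f (g j) = mvar j"
  shows "msubst f (jac (g(i := P))) * jac f = mpderiv i (msubst f P)"
proof -
  have substituted: "(\<lambda>j. msubst f ((g(i := P)) j)) = (\<lambda>j. mvar j)(i := msubst f P)"
    using assms by auto
  have "msubst f (jac (g(i := P))) * jac f = jac (\<lambda>j. msubst f ((g(i := P)) j))"
    by (rule jac_msubst[symmetric])
  also have "\<dots> = jac ((\<lambda>j. mvar j)(i := msubst f P))"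
    by (simp only: substituted)
  also have "\<dots> = mpderiv i (msubst f P)"
    by (rule jac_mvar_update)
  finally show ?thesis .
qed

section \<open>Weighted degrees\<close>

definition wt :: "('n::finite \<Rightarrow> real) \<Rightarrow> ('n \<Rightarrow>\<^sub>0 nat) \<Rightarrow> real" where
  "wt w m = (\<Sum>i\<in>UNIV. w i * real (Poly_Mapping.lookup m i))"

definition wt_bounded :: "('n::finite \<Rightarrow> real) \<Rightarrow> ('n, 'a::zero) mpoly \<Rightarrow> real \<Rightarrow> bool" where
  "wt_bounded w P c \<longleftrightarrow> (\<forall>m\<in>Poly_Mapping.keys P. wt w m \<le> c)"

lemma wt_add: "wt w (a + b) = wt w a + wt w b"
  by (simp add: wt_def lookup_add distrib_left sum.distrib)

lemma wt_zero[simp]: "wt w 0 = 0"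
  by (simp add: wt_def)

lemma wt_var_exp: "wt w (var_exp k) = w k"
proof -
  have "wt w (var_exp k) = (\<Sum>i\<in>UNIV. if k = i then w i else 0)"
    unfolding wt_def by (rule sum.cong) (auto simp: lookup_single when_def)
  then show ?thesis by simp
qed

lemma wt_diff_var_exp:
  assumes "Poly_Mapping.lookup m i > 0"
  shows "wt w (m - var_exp i) = wt w m - w i"
proof -
  have "wt w (m - var_exp i) = (\<Sum>j\<in>UNIV. w j * real (Poly_Mapping.lookup m j) - (if j = i then w j else 0))"
    unfolding wt_def
    by (rule sum.cong) (use assms in \<open>auto simp: lookup_minus lookup_single when_def algebra_simps\<close>)
  then show ?thesis by (simp add: sum_subtractf wt_def)
qed

lemma wt_pos:
  assumes "\<forall>i. w i > 0" "m \<noteq> 0"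
  shows "wt w m > 0"
proof -
  obtain j where j: "Poly_Mapping.lookup m j \<noteq> 0"
    using assms(2) by (metis lookup_zero poly_mapping_eqI)
  show ?thesis unfolding wt_def
    by (rule sum_pos2[where i=j]) (use assms(1) j in \<open>auto, metis less_imp_le mult_nonneg_nonneg of_nat_0_le_iff\<close>)
qed

lemma keys_nonempty: "P \<noteq> 0 \<Longrightarrow> Poly_Mapping.keys P \<noteq> {}"
  by (metis in_keys_iff poly_mapping_eqI lookup_zero equals0I)

lemma wdeg_eq_Max: "P \<noteq> 0 \<Longrightarrow> wdeg w P = Max ((\<lambda>m. ereal (wt w m)) ` Poly_Mapping.keys P)"
  unfolding wdeg_def wt_def by simp

lemma wdeg_le_iff: "wdeg w P \<le> ereal c \<longleftrightarrow> wt_bounded w P c"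
proof (cases "P = 0")
  case True
  then show ?thesis by (simp add: wdeg_def wt_bounded_def)
next
  case False
  then show ?thesis unfolding wdeg_eq_Max[OF False] wt_bounded_def
    by (subst Max_le_iff) (auto simp: keys_nonempty)
qed

lemma wdeg_ge: "m \<in> Poly_Mapping.keys P \<Longrightarrow> ereal (wt w m) \<le> wdeg w P"
  by (subst wdeg_eq_Max) (auto intro: Max_ge)

lemma wdeg_attained:
  assumes "P \<noteq> 0"
  obtains m where "m \<in> Poly_Mapping.keys P" "wdeg w P = ereal (wt w m)"
proof -
  have "wdeg w P \<in> (\<lambda>m. ereal (wt w m)) ` Poly_Mapping.keys P"
    unfolding wdeg_eq_Max[OF assms] by (rule Max_in) (auto simp: keys_nonempty assms)
  then show ?thesis using that by auto
qed

lemma wdeg_real: "P \<noteq> 0 \<Longrightarrow> wdeg w P = ereal (real_of_ereal (wdeg w P))"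
  by (metis real_of_ereal.simps(1) wdeg_attained)

lemma wt_bounded_wdeg: "wt_bounded w P (real_of_ereal (wdeg w P))"
  by (cases "P = 0") (simp add: wt_bounded_def, metis wdeg_le_iff wdeg_real order_refl)

lemma wdeg_single: "a \<noteq> 0 \<Longrightarrow> wdeg w (Poly_Mapping.single m a) = ereal (wt w m)"
  by (subst wdeg_eq_Max) (auto simp: single_ne_zero)

lemma wdeg_mvar: "wdeg w (mvar k :: ('n::finite, 'a::comm_ring_1) mpoly) = ereal (w k)"
  unfolding mvar_def by (simp add: wdeg_single wt_var_exp[simplified])

lemma wt_bounded_0[simp]: "wt_bounded w 0 c"
  by (simp add: wt_bounded_def)

lemma wt_bounded_1: "wt_bounded w (1::('n::finite, 'a::zero_neq_one) mpoly) 0"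
  by (simp add: wt_bounded_def)

lemma wt_bounded_mono: "wt_bounded w P a \<Longrightarrow> a \<le> b \<Longrightarrow> wt_bounded w P b"
  unfolding wt_bounded_def by force

lemma wt_bounded_add: "wt_bounded w P c \<Longrightarrow> wt_bounded w Q c \<Longrightarrow> wt_bounded w (P + Q) c"
  unfolding wt_bounded_def using keys_add[of P Q] by blast

lemma wt_bounded_mult: "wt_bounded w P a \<Longrightarrow> wt_bounded w Q b \<Longrightarrow> wt_bounded w (P * Q) (a + b)"
  unfolding wt_bounded_def using keys_mult[of P Q] by (force simp: wt_add intro: add_mono)

lemma wt_bounded_single: "wt w m \<le> c \<Longrightarrow> wt_bounded w (Poly_Mapping.single m a) c"
  by (simp add: wt_bounded_def)

lemma wt_bounded_mconst: "wt_bounded w (mconst a) 0"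
  unfolding mconst_def by (rule wt_bounded_single) simp

lemma wt_bounded_sum: "(\<And>x. x \<in> S \<Longrightarrow> wt_bounded w (F x) c) \<Longrightarrow> wt_bounded w (sum F S) c"
  by (induction S rule: infinite_finite_induct) (auto intro: wt_bounded_add)

lemma wt_bounded_prod:
  "(\<And>x. x \<in> S \<Longrightarrow> wt_bounded w (F x) (c x)) \<Longrightarrow> wt_bounded w (prod F S) (sum c S)"
  by (induction S rule: infinite_finite_induct) (auto intro: wt_bounded_mult wt_bounded_1)

lemma wt_bounded_pow: "wt_bounded w P a \<Longrightarrow> wt_bounded w (P ^ n) (real n * a)"
proof (induction n)
  case 0
  then show ?case by (simp add: wt_bounded_1)
next
  case (Suc n)
  then have "wt_bounded w (P * P ^ n) (a + real n * a)" by (intro wt_bounded_mult) auto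
  then show ?case by (simp add: algebra_simps)
qed

lemma wt_bounded_msubst:
  assumes F: "\<And>j. wt_bounded w (F j) (d j)" and R: "wt_bounded d R c"
  shows "wt_bounded w (msubst F R) c"
  unfolding msubst_def
proof (rule wt_bounded_sum)
  fix m assume m: "m \<in> Poly_Mapping.keys R"
  have "wt_bounded w (\<Prod>i\<in>UNIV. F i ^ Poly_Mapping.lookup m i) (\<Sum>i\<in>UNIV. real (Poly_Mapping.lookup m i) * d i)"
    by (rule wt_bounded_prod) (rule wt_bounded_pow[OF F])
  then have "wt_bounded w (mconst (Poly_Mapping.lookup R m) * (\<Prod>i\<in>UNIV. F i ^ Poly_Mapping.lookup m i))
      (0 + (\<Sum>i\<in>UNIV. real (Poly_Mapping.lookup m i) * d i))"
    by (rule wt_bounded_mult[OF wt_bounded_mconst])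
  moreover have "0 + (\<Sum>i\<in>UNIV. real (Poly_Mapping.lookup m i) * d i) = wt d m"
    by (simp add: wt_def mult.commute)
  moreover have "wt d m \<le> c" using R m by (simp add: wt_bounded_def)
  ultimately show "wt_bounded w (mconst (Poly_Mapping.lookup R m) * (\<Prod>i\<in>UNIV. F i ^ Poly_Mapping.lookup m i)) c"
    by (auto intro: wt_bounded_mono)
qed

lemma wdeg_msubst_le: "wdeg w (msubst F R) \<le> wdeg (\<lambda>j. real_of_ereal (wdeg w (F j))) R"
proof (cases "R = 0")
  case False
  then show ?thesis
    by (metis wdeg_le_iff wdeg_real wt_bounded_msubst wt_bounded_wdeg)
qed (simp add: wdeg_def)

lemma wdeg_mconst_mult_le: "wdeg w (mconst c * P) \<le> wdeg w P"
proof (cases "P = 0")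
  case False
  then show ?thesis
    by (metis add_0 wdeg_le_iff wdeg_real wt_bounded_mconst wt_bounded_mult wt_bounded_wdeg)
qed simp

lemma wt_bounded_mpderiv:
  assumes "wt_bounded w P c"
  shows "wt_bounded w (mpderiv i P) (c - w i)"
  unfolding mpderiv_def
proof (rule wt_bounded_sum)
  fix m assume m: "m \<in> Poly_Mapping.keys P"
  show "wt_bounded w (Poly_Mapping.single (m - var_exp i) (of_nat (Poly_Mapping.lookup m i) * Poly_Mapping.lookup P m)) (c - w i)"
  proof (cases "Poly_Mapping.lookup m i > 0")
    case True
    then show ?thesis
      using assms m wt_diff_var_exp[OF True, of w] by (intro wt_bounded_single) (auto simp: wt_bounded_def)
  qed simp
qed

lemma wdeg_mpderiv_le: "wdeg w (mpderiv i P) \<le> wdeg w P - ereal (w i)"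
proof (cases "P = 0")
  case False
  have "wt_bounded w (mpderiv i P) (real_of_ereal (wdeg w P) - w i)"
    by (rule wt_bounded_mpderiv[OF wt_bounded_wdeg])
  then have "wdeg w (mpderiv i P) \<le> ereal (real_of_ereal (wdeg w P) - w i)"
    by (simp only: wdeg_le_iff)
  then show ?thesis
    by (subst wdeg_real[OF False]) simp
qed (simp add: wdeg_def)

lemma lookup_mpderiv_diff_var_exp:
  assumes "Poly_Mapping.lookup m i > 0"
  shows "Poly_Mapping.lookup (mpderiv i P) (m - var_exp i) = of_nat (Poly_Mapping.lookup m i) * Poly_Mapping.lookup P m"
proof -
  have "Poly_Mapping.lookup (mpderiv i P) (m - var_exp i) =
     (\<Sum>m'\<in>Poly_Mapping.keys P. if m' - var_exp i = m - var_exp i then of_nat (Poly_Mapping.lookup m' i) * Poly_Mapping.lookup P m' else 0)"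
    unfolding mpderiv_def by (simp add: lookup_sum lookup_single when_def)
  also have "\<dots> = (\<Sum>m'\<in>Poly_Mapping.keys P. if m' = m then of_nat (Poly_Mapping.lookup m i) * Poly_Mapping.lookup P m else 0)"
  proof (rule sum.cong)
    fix m' assume "m' \<in> Poly_Mapping.keys P"
    show "(if m' - var_exp i = m - var_exp i then of_nat (Poly_Mapping.lookup m' i) * Poly_Mapping.lookup P m' else 0) =
          (if m' = m then of_nat (Poly_Mapping.lookup m i) * Poly_Mapping.lookup P m else 0)"
    proof (cases "Poly_Mapping.lookup m' i > 0 \<and> m' - var_exp i = m - var_exp i")
      case True
      have "m' = m"
      proof (rule poly_mapping_eqI)
        fix j
        have "Poly_Mapping.lookup (m' - var_exp i) j = Poly_Mapping.lookup (m - var_exp i) j" using True by simp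
        then show "Poly_Mapping.lookup m' j = Poly_Mapping.lookup m j"
          using True assms by (cases "j = i") (auto simp: lookup_minus lookup_var_exp)
      qed
      then show ?thesis by simp
    qed (use assms in auto)
  qed simp
  also have "\<dots> = of_nat (Poly_Mapping.lookup m i) * Poly_Mapping.lookup P m"
    by (simp add: in_keys_iff)
  finally show ?thesis .
qed

text \<open>Differentiate along a variable occurring in a monomial of top weight; characteristic zero
  keeps that monomial alive.\<close>
lemma exists_wdeg_le_wdeg_mpderiv_add:
  fixes F :: "('n::finite, 'a::{idom, ring_char_0}) mpoly"
  assumes w_pos: "\<forall>i. w i > 0" and nonconst: "\<forall>c. F \<noteq> mconst c"
  shows "\<exists>i. wdeg w F \<le> wdeg w (mpderiv i F) + ereal (w i)"
proof -
  have "F \<noteq> 0" using nonconst mconst_0 by metis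
  then obtain m where m: "m \<in> Poly_Mapping.keys F" "wdeg w F = ereal (wt w m)"
    by (rule wdeg_attained)
  have "m \<noteq> 0"
  proof
    assume "m = 0"
    then have "wt_bounded w F 0" using m(2) wdeg_le_iff by (metis wt_zero order_refl)
    then have "Poly_Mapping.keys F \<subseteq> {0}" using wt_pos[OF w_pos] unfolding wt_bounded_def by force
    then show False using mpoly_eq_mconstI nonconst by blast
  qed
  then obtain i where i: "Poly_Mapping.lookup m i > 0"
    by (metis gr0I lookup_zero poly_mapping_eqI)
  have "m - var_exp i \<in> Poly_Mapping.keys (mpderiv i F)"
    using lookup_mpderiv_diff_var_exp[OF i, of F] i m(1) by (simp add: in_keys_iff)
  then have "ereal (wt w m - w i) \<le> wdeg w (mpderiv i F)"
    using wdeg_ge wt_diff_var_exp[OF i] by metis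
  then have "wdeg w F \<le> wdeg w (mpderiv i F) + ereal (w i)"
    using m(2) by (cases "wdeg w (mpderiv i F)") auto
  then show ?thesis ..
qed

section \<open>Degrees of derivations\<close>

lemma ereal_diff_le_uminus: "x \<le> ereal p - ereal q \<Longrightarrow> x - ereal p \<le> - ereal q"
  by (cases x) auto

lemma ereal_uminus_le_diff: "ereal p \<le> x + ereal q \<Longrightarrow> - ereal q \<le> x - ereal p"
  by (cases x) auto

lemma deriv_deg_ge: "P \<noteq> 0 \<Longrightarrow> wdeg w (D P) - wdeg w P \<le> deriv_deg w D"
  unfolding deriv_deg_def by (rule Sup_upper) blast

lemma deriv_deg_mconst_mult_mpderiv:
  fixes w :: "'n::finite \<Rightarrow> real" and c :: "'a::comm_ring_1"
  assumes "c \<noteq> 0"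
  shows "deriv_deg w (\<lambda>P. mconst c * mpderiv i P) = - ereal (w i)"
proof (rule antisym)
  show "deriv_deg w (\<lambda>P. mconst c * mpderiv i P) \<le> - ereal (w i)"
    unfolding deriv_deg_def
  proof (rule Sup_least, clarify)
    fix P :: "('n, 'a) mpoly"
    assume "P \<noteq> 0"
    have "wdeg w (mconst c * mpderiv i P) \<le> wdeg w P - ereal (w i)"
      using wdeg_mconst_mult_le wdeg_mpderiv_le by (rule order_trans)
    then show "wdeg w (mconst c * mpderiv i P) - wdeg w P \<le> - ereal (w i)"
      by (subst (asm) (1) wdeg_real[OF \<open>P \<noteq> 0\<close>], subst wdeg_real[OF \<open>P \<noteq> 0\<close>])
         (rule ereal_diff_le_uminus)
  qed
  have "mconst c * mpderiv i (mvar i) = Poly_Mapping.single 0 c"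
    by (simp add: mpderiv_mvar mconst_def)
  then have "wdeg w (mconst c * mpderiv i (mvar i)) - wdeg w (mvar i :: ('n, 'a) mpoly) = - ereal (w i)"
    using assms by (simp add: wdeg_single wdeg_mvar)
  then show "- ereal (w i) \<le> deriv_deg w (\<lambda>P. mconst c * mpderiv i P)"
    using deriv_deg_ge[OF mvar_ne_zero, of w "\<lambda>P. mconst c * mpderiv i P" i] by simp
qed

text \<open>Any \<open>k\<close> will do. The witness is \<open>P = x\<^sub>k\<close>: after substituting \<open>\<Phi>\<close>, \<open>\<Delta>\<^sub>i(x\<^sub>k)\<close> becomes \<open>\<lambda>\<^sup>-\<^sup>1 \<partial>f\<^sub>k/\<partial>x\<^sub>i\<close>.\<close>
lemma exists_deriv_deg_jac_update_ge:
  fixes f g :: "'n::finite \<Rightarrow> ('n, 'a::{idom, ring_char_0}) mpoly"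
  assumes w_pos: "\<forall>i. w i > 0"
    and inv1: "\<forall>i. msubst g (f i) = mvar i"
    and inv2: "\<forall>i. msubst f (g i) = mvar i"
    and jac_f: "jac f = mconst lam"
  shows "\<exists>i. - ereal (w i) \<le> deriv_deg (\<lambda>k. real_of_ereal (wdeg w (f k))) (\<lambda>P. jac (g(i := P)))"
proof -
  define d where "d = (\<lambda>k. real_of_ereal (wdeg w (f k)))"
  fix k :: 'n
  have nonconst: "f k \<noteq> mconst c" for c
    using inv1 mconst_ne_mvar msubst_mconst by metis
  then obtain i where i: "wdeg w (f k) \<le> wdeg w (mpderiv i (f k)) + ereal (w i)"
    using exists_wdeg_le_wdeg_mpderiv_add[OF w_pos] by blast
  have "mpderiv i (f k) = mconst lam * msubst f (jac (g(i := mvar k)))"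
    using msubst_jac_update_mult_jac[OF inv2, of i "mvar k"] jac_f by (simp add: mult.commute)
  then have "wdeg w (mpderiv i (f k)) \<le> wdeg w (msubst f (jac (g(i := mvar k))))"
    by (simp add: wdeg_mconst_mult_le)
  also have "\<dots> \<le> wdeg d (jac (g(i := mvar k)))"
    unfolding d_def by (rule wdeg_msubst_le)
  finally have "wdeg w (mpderiv i (f k)) \<le> wdeg d (jac (g(i := mvar k)))" .
  with i have "ereal (d k) \<le> wdeg d (jac (g(i := mvar k))) + ereal (w i)"
    unfolding d_def using wdeg_real[of "f k" w] nonconst[of 0] by (auto intro: add_right_mono order_trans)
  then have "- ereal (w i) \<le> wdeg d (jac (g(i := mvar k))) - wdeg d (mvar k :: ('n, 'a) mpoly)"
    unfolding wdeg_mvar by (rule ereal_uminus_le_diff)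
  also have "\<dots> \<le> deriv_deg d (\<lambda>P. jac (g(i := P)))"
    by (rule deriv_deg_ge[OF mvar_ne_zero])
  finally show ?thesis unfolding d_def by blast
qed

theorem lemma5:
  fixes w :: "'n::finite \<Rightarrow> real"
    and f g :: "'n \<Rightarrow> ('n, 'a::{alg_closed_field, field_char_0}) mpoly"
    and lam :: 'a
  assumes w_pos: "\<forall>i. w i > 0"
    and inv1: "\<forall>i. msubst g (f i) = mvar i"
    and inv2: "\<forall>i. msubst f (g i) = mvar i"
    and jac_f: "jac f = mconst lam"
  shows "\<exists>i. deriv_deg (\<lambda>k. real_of_ereal (wdeg w (f k))) (\<lambda>P. jac (g(i := P)))
               \<ge> deriv_deg w (\<lambda>P. mconst (inverse lam) * mpderiv i P)
           \<and> deriv_deg w (\<lambda>P. mconst (inverse lam) * mpderiv i P) = - ereal (w i)"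
proof -
  have "lam \<noteq> 0"
    using msubst_jac_mult_jac_inverse[OF inv1] jac_f by auto
  obtain i where Delta: "- ereal (w i) \<le> deriv_deg (\<lambda>k. real_of_ereal (wdeg w (f k))) (\<lambda>P. jac (g(i := P)))"
    using exists_deriv_deg_jac_update_ge[OF w_pos inv1 inv2 jac_f] by blast
  have delta: "deriv_deg w (\<lambda>P. mconst (inverse lam) * mpderiv i P) = - ereal (w i)"
    using \<open>lam \<noteq> 0\<close> by (intro deriv_deg_mconst_mult_mpderiv) simp
  show ?thesis
    using Delta delta by (intro exI[of _ i] conjI) simp_all
qed

end
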